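(* Let $\varLambda\subseteq\mathbb{R}$ be uniformly discrete, and let $\mathcal{A}=(A_n)_n$ be a van Hove sequence of intervals with $\mathrm{card}(F_n)\to\infty$, where $F_n=\varLambda\cap A_n$. Then for all $t\in\varLambda-\varLambda$, \[\lim_{n\to\infty}\frac{\mathrm{card}(\varLambda\cap(-t+\varLambda)\cap A_n)-\mathrm{card}(F_n\cap(-t+F_n))}{\mathrm{card}(F_n)}=0.\] In particular, if $\varLambda$ has finite local complexity, then the counting autocorrelation $\gamma_{\mathrm{count}}$ of $\varLambda$ exists with respect to $\mathcal{A}$ if and only if for all $t\in\mathbb{R}$ the limit \[\eta_{\mathrm{count}}(t)=\lim_{n\to\infty}\frac{\mathrm{card}(F_n\cap(-t+\varLambda))}{\mathrm{card}(F_n)}\] exists; and in this case $\gamma_{\mathrm{count}}=\sum_{t\in\varLambda-\varLambda}\eta_{\mathrm{count}}(t)\delta_t$.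
   Context: Uniformly discrete: there is $r>0$ with $|x-y|\ge r$ for all distinct $x,y\in\varLambda$. Finite local complexity: $\varLambda-\varLambda$ is locally finite. A sequence of intervals $([a_n,b_n])_n$ is van Hove iff $b_n-a_n\to\infty$. For finite $F$, $\gamma_F=\frac{1}{\mathrm{card}(F)}\sum_{x,y\in F}\delta_{x-y}$ if $F\ne\emptyset$, $\gamma_\emptyset=0$; the counting autocorrelation is the vague limit of $\gamma_{F_n}$. *)

theory Defs
  imports "HOL-Analysis.Analysis"
begin

definition uniformly_discrete :: "real set \<Rightarrow> bool" where
  "uniformly_discrete \<Lambda> \<longleftrightarrow> (\<exists>r>0. \<forall>x\<in>\<Lambda>. \<forall>y\<in>\<Lambda>. x \<noteq> y \<longrightarrow> \<bar>x - y\<bar> \<ge> r)"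

definition diffset :: "real set \<Rightarrow> real set" where
  "diffset \<Lambda> = {x - y | x y. x \<in> \<Lambda> \<and> y \<in> \<Lambda>}"

definition finite_local_complexity :: "real set \<Rightarrow> bool" where
  "finite_local_complexity \<Lambda> \<longleftrightarrow> (\<forall>K. compact K \<longrightarrow> finite (K \<inter> diffset \<Lambda>))"

text \<open>gamma_F = (1/card F) * sum over x,y in F of delta_(x-y), and gamma_{} = 0, as a Borel measure.\<close>
definition autocorr_measure :: "real set \<Rightarrow> real measure" where
  "autocorr_measure F = measure_of UNIV (sets borel)
     (\<lambda>A. if F = {} then 0
          else ennreal (real (card {(x, y). x \<in> F \<and> y \<in> F \<and> x - y \<in> A}) / real (card F)))"

definition radon_measure :: "real measure \<Rightarrow> bool" where
  "radon_measure \<mu> \<longleftrightarrow> sets \<mu> = sets borel \<and> (\<forall>K. compact K \<longrightarrow> emeasure \<mu> K < \<infinity>)"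

definition vague_limit :: "(nat \<Rightarrow> real measure) \<Rightarrow> real measure \<Rightarrow> bool" where
  "vague_limit \<mu>s \<mu> \<longleftrightarrow> radon_measure \<mu> \<and>
     (\<forall>f :: real \<Rightarrow> real. continuous_on UNIV f \<and> compact (closure {x. f x \<noteq> 0}) \<longrightarrow>
        (\<lambda>n. integral\<^sup>L (\<mu>s n) f) \<longlonglongrightarrow> integral\<^sup>L \<mu> f)"

end

theory Submission
  imports Defs
begin

(*
  A point z of \<Lambda> \<inter> (-t + \<Lambda>) \<inter> [a, b] is missing from F \<inter> (-t + F), F = \<Lambda> \<inter> [a, b],
  only if t + z leaves [a, b], so z lies within |t| of an endpoint. Uniform discreteness bounds
  the number of such points independently of the interval, hence the difference of the two
  counts is bounded and vanishes after division by card F\<^sub>n \<rightarrow> \<infinity>.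

  The autocorrelation \<gamma>\<^sub>F is the comb \<Sum>\<^sub>t c\<^sub>F(t) \<delta>\<^sub>t with c\<^sub>F(t) = card (F \<inter> (-t + F)) / card F,
  supported in \<Lambda> - \<Lambda>. Under finite local complexity \<Lambda> - \<Lambda> is locally finite, so integrating
  a continuous compactly supported function against \<gamma>\<^sub>F is a fixed finite sum of the c\<^sub>F(t):
  pointwise convergence of the coefficients gives vague convergence to \<Sum>\<^sub>t lim c\<^sub>F\<^sub>n(t) \<delta>\<^sub>t, and
  conversely a tent function isolating a single point t of \<Lambda> - \<Lambda> recovers c\<^sub>F\<^sub>n(t) as an
  integral. By the first part c\<^sub>F\<^sub>n(t) may be replaced by card (F\<^sub>n \<inter> (-t + \<Lambda>)) / card F\<^sub>n, and
  vague limits of Radon measures are unique because continuous trapezoids approximate the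
  indicators of half-open intervals, which generate the Borel sets.
*)

lemma mem_translation_iff: "z \<in> (\<lambda>y. - t + y) ` S \<longleftrightarrow> t + z \<in> S"
  for z t :: real
  by (auto intro: rev_image_eqI[of "t + z"])

lemma diff_mem_diffset: "x \<in> \<Lambda> \<Longrightarrow> y \<in> \<Lambda> \<Longrightarrow> x - y \<in> diffset \<Lambda>"
  unfolding diffset_def by blast

lemma separated_card_Int_interval_le:
  fixes \<Lambda> :: "real set" and r c d :: real
  assumes r: "r > 0" and sep: "\<And>x y. x \<in> \<Lambda> \<Longrightarrow> y \<in> \<Lambda> \<Longrightarrow> x \<noteq> y \<Longrightarrow> r \<le> \<bar>x - y\<bar>"
  shows "finite (\<Lambda> \<inter> {c..d}) \<and> card (\<Lambda> \<inter> {c..d}) \<le> nat \<lfloor>(d - c) / r\<rfloor> + 1"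
proof -
  define g where "g x = nat \<lfloor>(x - c) / r\<rfloor>" for x
  have "inj_on g (\<Lambda> \<inter> {c..d})"
  proof (rule inj_onI, rule ccontr)
    fix x y assume x: "x \<in> \<Lambda> \<inter> {c..d}" and y: "y \<in> \<Lambda> \<inter> {c..d}" and "g x = g y" "x \<noteq> y"
    moreover have "0 \<le> (x - c) / r" "0 \<le> (y - c) / r"
      using x y r by auto
    ultimately have "\<lfloor>(x - c) / r\<rfloor> = \<lfloor>(y - c) / r\<rfloor>"
      by (simp add: g_def eq_nat_nat_iff)
    then have "\<bar>(x - c) / r - (y - c) / r\<bar> < 1"
      by linarith
    then have "\<bar>x - y\<bar> < r"
      using r by (simp add: diff_divide_distrib[symmetric] abs_divide divide_less_eq)
    with sep x y \<open>x \<noteq> y\<close> show False by fastforce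
  qed
  moreover have "g ` (\<Lambda> \<inter> {c..d}) \<subseteq> {..nat \<lfloor>(d - c) / r\<rfloor>}"
    using r by (auto simp: g_def intro!: nat_mono floor_mono divide_right_mono)
  ultimately show ?thesis
    using inj_on_finite card_inj_on_le by (metis card_atMost finite_atMost Suc_eq_plus1)
qed

lemma uniformly_discrete_card_Int_interval_bounded:
  fixes \<Lambda> :: "real set" and L :: real
  assumes "uniformly_discrete \<Lambda>"
  obtains N where "\<And>c. card (\<Lambda> \<inter> {c..c + L}) \<le> N"
proof -
  from assms obtain r where "r > 0" "\<And>x y. x \<in> \<Lambda> \<Longrightarrow> y \<in> \<Lambda> \<Longrightarrow> x \<noteq> y \<Longrightarrow> r \<le> \<bar>x - y\<bar>"
    unfolding uniformly_discrete_def by blast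
  then have "card (\<Lambda> \<inter> {c..c + L}) \<le> nat \<lfloor>L / r\<rfloor> + 1" for c
    using separated_card_Int_interval_le[of r \<Lambda> c "c + L"] by simp
  then show ?thesis
    by (rule that)
qed

lemma uniformly_discrete_finite_Int_interval:
  "uniformly_discrete \<Lambda> \<Longrightarrow> finite (\<Lambda> \<inter> {a..b})"
  unfolding uniformly_discrete_def using separated_card_Int_interval_le by blast

lemma translation_Int_interval_diff_subset:
  fixes \<Lambda> :: "real set" and a b t :: real
  defines "F \<equiv> \<Lambda> \<inter> {a..b}"
  shows "\<Lambda> \<inter> (\<lambda>y. - t + y) ` \<Lambda> \<inter> {a..b} - F \<inter> (\<lambda>y. - t + y) ` F
           \<subseteq> \<Lambda> \<inter> {a..a + \<bar>t\<bar>} \<union> \<Lambda> \<inter> {b - \<bar>t\<bar>..b}"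
  unfolding F_def subset_iff Diff_iff Int_iff Un_iff mem_translation_iff atLeastAtMost_iff
  by arith

lemma card_translation_Int_interval_le:
  fixes \<Lambda> :: "real set" and a b t :: real
  defines "F \<equiv> \<Lambda> \<inter> {a..b}"
  assumes ud: "uniformly_discrete \<Lambda>" and N: "\<And>c. card (\<Lambda> \<inter> {c..c + \<bar>t\<bar>}) \<le> N"
  shows "card (F \<inter> (\<lambda>y. - t + y) ` F) \<le> card (\<Lambda> \<inter> (\<lambda>y. - t + y) ` \<Lambda> \<inter> {a..b})"
    and "card (\<Lambda> \<inter> (\<lambda>y. - t + y) ` \<Lambda> \<inter> {a..b}) \<le> card (F \<inter> (\<lambda>y. - t + y) ` F) + 2 * N"
proof -
  let ?A = "\<Lambda> \<inter> (\<lambda>y. - t + y) ` \<Lambda> \<inter> {a..b}" and ?B = "F \<inter> (\<lambda>y. - t + y) ` F"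
  have fin: "finite (\<Lambda> \<inter> {c..d})" for c d
    using ud by (rule uniformly_discrete_finite_Int_interval)
  have "?B \<subseteq> ?A" "finite ?A"
    using fin[of a b] by (auto simp: F_def elim: finite_subset[rotated])
  then show "card ?B \<le> card ?A"
    by (rule card_mono[rotated])
  have "card (?A - ?B) \<le> card (\<Lambda> \<inter> {a..a + \<bar>t\<bar>} \<union> \<Lambda> \<inter> {b - \<bar>t\<bar>..b})"
    using translation_Int_interval_diff_subset fin by (intro card_mono) (auto simp: F_def)
  also have "\<dots> \<le> card (\<Lambda> \<inter> {a..a + \<bar>t\<bar>}) + card (\<Lambda> \<inter> {b - \<bar>t\<bar>..b})"
    by (rule card_Un_le)
  also have "\<dots> \<le> 2 * N"
    using N[of a] N[of "b - \<bar>t\<bar>"] by simp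
  finally show "card ?A \<le> card ?B + 2 * N"
    using card_Diff_subset[OF finite_subset[OF \<open>?B \<subseteq> ?A\<close> \<open>finite ?A\<close>] \<open>?B \<subseteq> ?A\<close>] by linarith
qed

lemma tendsto_card_translation_boundary:
  fixes \<Lambda> :: "real set" and a b :: "nat \<Rightarrow> real"
  defines "F \<equiv> \<lambda>n. \<Lambda> \<inter> {a n..b n}"
  assumes ud: "uniformly_discrete \<Lambda>"
    and card_inf: "filterlim (\<lambda>n. card (F n)) at_top sequentially"
  shows "(\<lambda>n. (real (card (\<Lambda> \<inter> (\<lambda>y. - t + y) ` \<Lambda> \<inter> {a n..b n}))
                 - real (card (F n \<inter> (\<lambda>y. - t + y) ` F n))) / real (card (F n))) \<longlonglongrightarrow> 0"
proof -
  obtain N where N: "\<And>c. card (\<Lambda> \<inter> {c..c + \<bar>t\<bar>}) \<le> N"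
    using uniformly_discrete_card_Int_interval_bounded[OF ud, where L = "\<bar>t\<bar>"] by blast
  have bound: "\<forall>\<^sub>F n in sequentially.
          norm ((real (card (\<Lambda> \<inter> (\<lambda>y. - t + y) ` \<Lambda> \<inter> {a n..b n}))
                 - real (card (F n \<inter> (\<lambda>y. - t + y) ` F n))) / real (card (F n)))
          \<le> real (2 * N) / real (card (F n))"
  proof (intro always_eventually allI)
    fix n
    let ?A = "card (\<Lambda> \<inter> (\<lambda>y. - t + y) ` \<Lambda> \<inter> {a n..b n})" and ?B = "card (F n \<inter> (\<lambda>y. - t + y) ` F n)"
    have "?B \<le> ?A" "?A \<le> ?B + 2 * N"
      using card_translation_Int_interval_le[OF ud N, of "a n" "b n"] by (simp_all add: F_def)
    then have "\<bar>real ?A - real ?B\<bar> \<le> real (2 * N)"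
      by linarith
    then show "norm ((real ?A - real ?B) / real (card (F n))) \<le> real (2 * N) / real (card (F n))"
      by (simp add: abs_divide divide_right_mono)
  qed
  have "filterlim (\<lambda>n. real (card (F n))) at_top sequentially"
    using filterlim_compose[OF filterlim_real_sequentially card_inf] by (simp add: comp_def)
  then show ?thesis
    by (intro Lim_null_comparison[OF bound] tendsto_divide_0[OF tendsto_const] filterlim_at_top_imp_at_infinity)
qed

definition autocorr_coeff :: "real set \<Rightarrow> real \<Rightarrow> real" where
  "autocorr_coeff F t = real (card (F \<inter> (\<lambda>y. - t + y) ` F)) / real (card F)"

lemma autocorr_measure_eq_distr:
  assumes fin: "finite F" and ne: "F \<noteq> {}"
  shows "autocorr_measure F =
           distr (point_measure (F \<times> F) (\<lambda>_. ennreal (1 / real (card F)))) borel (\<lambda>(x, y). x - y)"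
    (is "_ = ?R")
proof -
  let ?P = "point_measure (F \<times> F) (\<lambda>_. ennreal (1 / real (card F)))"
  have "autocorr_measure F = measure_of UNIV (sets borel) (emeasure ?R)"
    unfolding autocorr_measure_def
  proof (rule measure_of_eq)
    fix A :: "real set" assume "A \<in> sigma_sets UNIV (sets borel)"
    then have A: "A \<in> sets borel"
      by (metis sets.sigma_sets_eq space_borel)
    let ?X = "{(x, y). x \<in> F \<and> y \<in> F \<and> x - y \<in> A}"
    have "finite ?X"
      by (rule finite_subset[of _ "F \<times> F"]) (use fin in auto)
    have "emeasure ?R A = emeasure ?P ?X"
      using A by (subst emeasure_distr) (auto simp: space_point_measure intro!: arg_cong2[where f = emeasure])
    also have "\<dots> = (\<Sum>p\<in>?X. ennreal (1 / real (card F)))"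
      using \<open>finite ?X\<close> by (intro emeasure_point_measure_finite2) auto
    also have "\<dots> = ennreal (real (card ?X) / real (card F))"
      by (simp add: ennreal_of_nat_eq_real_of_nat ennreal_mult[symmetric])
    finally show "(if F = {} then 0 else ennreal (real (card ?X) / real (card F))) = emeasure ?R A"
      using ne by simp
  qed simp
  also have "\<dots> = ?R"
    using measure_of_of_measure[of ?R] by simp
  finally show ?thesis .
qed

lemma integral_autocorr_measure:
  assumes fin: "finite F" and f: "f \<in> borel_measurable borel"
  shows "integral\<^sup>L (autocorr_measure F) f = (\<Sum>(x, y)\<in>F \<times> F. f (x - y)) / real (card F)"
proof (cases "F = {}")
  case True
  then have "autocorr_measure F = null_measure borel"
    by (simp add: autocorr_measure_def null_measure_def)
  with True show ?thesis
    by simp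
next
  case False
  then show ?thesis
    using fin f by (simp add: autocorr_measure_eq_distr integral_distr lebesgue_integral_point_measure_finite
        case_prod_unfold sum_divide_distrib)
qed

lemma sum_diff_pairs_eq_sum_card_translation:
  fixes F S :: "real set" and f :: "real \<Rightarrow> real"
  assumes fin: "finite F" "finite S"
    and vanish: "\<And>x y. x \<in> F \<Longrightarrow> y \<in> F \<Longrightarrow> x - y \<notin> S \<Longrightarrow> f (x - y) = 0"
  shows "(\<Sum>(x, y)\<in>F \<times> F. f (x - y)) = (\<Sum>t\<in>S. f t * real (card (F \<inter> (\<lambda>y. - t + y) ` F)))"
proof -
  have "(\<Sum>(x, y)\<in>F \<times> F. f (x - y)) = (\<Sum>(x, y)\<in>{(x, y)\<in>F \<times> F. x - y \<in> S}. f (x - y))"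
    using fin vanish by (intro sum.mono_neutral_right) auto
  also have "\<dots> = (\<Sum>(t, y)\<in>Sigma S (\<lambda>t. F \<inter> (\<lambda>y. - t + y) ` F). f t)"
    by (rule sum.reindex_bij_witness[where i = "\<lambda>(t, y). (t + y, y)" and j = "\<lambda>(x, y). (x - y, y)"])
      auto
  also have "\<dots> = (\<Sum>t\<in>S. f t * real (card (F \<inter> (\<lambda>y. - t + y) ` F)))"
    using fin by (subst sum.Sigma[symmetric]) (auto simp: mult.commute)
  finally show ?thesis .
qed

lemma integral_autocorr_measure_eq_sum:
  fixes F S :: "real set" and f :: "real \<Rightarrow> real"
  assumes "finite F" "finite S" "f \<in> borel_measurable borel"
    and "\<And>x y. x \<in> F \<Longrightarrow> y \<in> F \<Longrightarrow> x - y \<notin> S \<Longrightarrow> f (x - y) = 0"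
  shows "integral\<^sup>L (autocorr_measure F) f = (\<Sum>t\<in>S. f t * autocorr_coeff F t)"
  using assms by (simp add: integral_autocorr_measure sum_diff_pairs_eq_sum_card_translation
      autocorr_coeff_def sum_divide_distrib)

lemma Int_translation_eq_empty:
  "F \<subseteq> \<Lambda> \<Longrightarrow> t \<notin> diffset \<Lambda> \<Longrightarrow> F \<inter> (\<lambda>y. - t + y) ` \<Lambda> = {}"
  unfolding diffset_def by force

definition ramp :: "real \<Rightarrow> real \<Rightarrow> real \<Rightarrow> real \<Rightarrow> real" where
  "ramp a b e x = max 0 (min 1 (min ((x - a) / e) ((b + e - x) / e)))"

lemma continuous_on_ramp: "e \<noteq> 0 \<Longrightarrow> continuous_on UNIV (ramp a b e)"
  unfolding ramp_def by (intro continuous_intros) auto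

lemma ramp_eq_0:
  assumes "e > 0" "x \<le> a \<or> b + e \<le> x"
  shows "ramp a b e x = 0"
proof -
  have "(x - a) / e \<le> 0 \<or> (b + e - x) / e \<le> 0"
    using assms by (auto simp: divide_nonpos_pos)
  then have "min 1 (min ((x - a) / e) ((b + e - x) / e)) \<le> 0"
    by (auto simp: min_le_iff_disj)
  then show ?thesis
    unfolding ramp_def by (rule max_absorb1)
qed

lemma ramp_support_subset:
  assumes "e > 0"
  shows "{x. ramp a b e x \<noteq> 0} \<subseteq> {a..b + e}"
proof
  fix x assume "x \<in> {x. ramp a b e x \<noteq> 0}"
  then have "\<not> (x \<le> a \<or> b + e \<le> x)"
    using ramp_eq_0[OF assms] by blast
  then show "x \<in> {a..b + e}"
    by simp
qed

lemma compact_support_ramp: "e > 0 \<Longrightarrow> compact (closure {x. ramp a b e x \<noteq> 0})"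
  unfolding compact_closure by (rule bounded_subset[OF bounded_closed_interval ramp_support_subset])

lemma abs_ramp_le_indicator:
  assumes "e > 0"
  shows "\<bar>ramp a b e x\<bar> \<le> indicator {a..b + e} x"
proof (cases "x \<in> {a..b + e}")
  case True
  then show ?thesis
    by (simp add: ramp_def)
next
  case False
  then have "ramp a b e x = 0"
    using ramp_support_subset[OF assms] by blast
  then show ?thesis
    by simp
qed

lemma ramp_eq_1: "e > 0 \<Longrightarrow> a + e \<le> x \<Longrightarrow> x \<le> b \<Longrightarrow> ramp a b e x = 1"
  by (simp add: ramp_def le_divide_eq)

lemma tendsto_ramp_indicator: "(\<lambda>k. ramp a b (1 / Suc k) x) \<longlonglongrightarrow> indicator {a<..b} x"
proof (rule tendsto_eventually)
  have lim: "(\<lambda>k. 1 / real (Suc k)) \<longlonglongrightarrow> 0"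
    by (rule LIMSEQ_Suc[OF lim_inverse_n'])
  consider "a < x" "x \<le> b" | "x \<le> a" | "b < x"
    by fastforce
  then show "\<forall>\<^sub>F k in sequentially. ramp a b (1 / Suc k) x = indicator {a<..b} x"
  proof cases
    case 1
    then have "\<forall>\<^sub>F k in sequentially. 1 / real (Suc k) < x - a"
      using order_tendstoD(2)[OF lim, of "x - a"] by simp
    then show ?thesis
      by (rule eventually_mono) (use 1 in \<open>simp add: ramp_eq_1\<close>)
  next
    case 2
    then show ?thesis
      by (simp add: ramp_eq_0)
  next
    case 3
    then have "\<forall>\<^sub>F k in sequentially. 1 / real (Suc k) < x - b"
      using order_tendstoD(2)[OF lim, of "x - b"] by simp
    then show ?thesis
      by (rule eventually_mono) (use 3 in \<open>simp add: ramp_eq_0\<close>)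
  qed
qed

lemma radon_measure_emeasure_Ioc_finite:
  assumes "radon_measure M"
  shows "emeasure M {c<..d} \<noteq> \<infinity>"
proof -
  have "emeasure M {c<..d} \<le> emeasure M {c..d}"
    using assms by (intro emeasure_mono) (auto simp: radon_measure_def)
  also have "\<dots> < \<infinity>"
    using assms by (simp add: radon_measure_def)
  finally show ?thesis
    by simp
qed

lemma tendsto_integral_ramp:
  assumes M: "radon_measure M"
  shows "(\<lambda>k. integral\<^sup>L M (ramp a b (1 / Suc k))) \<longlonglongrightarrow> measure M {a<..b}"
proof -
  have sets_M: "sets M = sets borel"
    using M by (simp add: radon_measure_def)
  have "(\<lambda>k. integral\<^sup>L M (ramp a b (1 / Suc k))) \<longlonglongrightarrow> integral\<^sup>L M (indicator {a<..b})"
  proof (rule integral_dominated_convergence[where w = "indicator {a..b + 1}"])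
    show "integrable M (indicator {a..b + 1} :: real \<Rightarrow> real)"
      using M by (intro integrable_real_indicator) (auto simp: radon_measure_def)
    show "AE x in M. norm (ramp a b (1 / Suc k) x) \<le> indicator {a..b + 1} x" for k
    proof (intro AE_I2)
      fix x
      have subset: "{a..b + 1 / Suc k} \<subseteq> {a..b + 1}"
        by (simp add: divide_le_eq)
      have "\<bar>ramp a b (1 / Suc k) x\<bar> \<le> indicator {a..b + 1 / Suc k} x"
        by (rule abs_ramp_le_indicator) simp
      also have "\<dots> \<le> indicator {a..b + 1} x"
        using subset by (intro indicator_leI) blast
      finally show "norm (ramp a b (1 / Suc k) x) \<le> indicator {a..b + 1} x"
        by simp
    qed
  qed (use tendsto_ramp_indicator continuous_on_ramp in
        \<open>auto simp: measurable_cong_sets[OF sets_M refl] intro: borel_measurable_continuous_onI\<close>)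
  then show ?thesis
    using sets_eq_imp_space_eq[OF sets_M] by simp
qed

lemma radon_measure_eqI:
  assumes M: "radon_measure M" and N: "radon_measure N"
    and eq: "\<And>f :: real \<Rightarrow> real. continuous_on UNIV f \<Longrightarrow> compact (closure {x. f x \<noteq> 0}) \<Longrightarrow>
               integral\<^sup>L M f = integral\<^sup>L N f"
  shows "M = N"
proof (rule measure_eqI_generator_eq[where \<Omega> = UNIV and E = "range (\<lambda>(a, b). {a<..b})"
      and A = "\<lambda>i. {- real i<..real i}"])
  show "sets M = sigma_sets UNIV (range (\<lambda>(a, b). {a<..b :: real}))"
    "sets N = sigma_sets UNIV (range (\<lambda>(a, b). {a<..b :: real}))"
    using M N by (simp_all add: radon_measure_def borel_sigma_sets_Ioc)
  show "(\<Union>i. {- real i<..real i}) = UNIV"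
  proof (intro equalityI subsetI)
    fix x :: real
    obtain n :: nat where "\<bar>x\<bar> < real n"
      using reals_Archimedean2 by blast
    then show "x \<in> (\<Union>i. {- real i<..real i})"
      by (intro UN_I[of n]) auto
  qed simp
  show "Int_stable (range (\<lambda>(a, b). {a<..b :: real}))"
    by (auto simp: Int_stable_def)
  show "range (\<lambda>i. {- real i<..real i}) \<subseteq> range (\<lambda>(a, b). {a<..b})"
    by auto
  show "emeasure M {- real i<..real i} \<noteq> \<infinity>" for i
    using M by (rule radon_measure_emeasure_Ioc_finite)
  fix X assume "X \<in> range (\<lambda>(a, b). {a<..b :: real})"
  then obtain a b where X: "X = {a<..b}"
    by auto
  have "integral\<^sup>L M (ramp a b (1 / Suc k)) = integral\<^sup>L N (ramp a b (1 / Suc k))" for k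
    by (intro eq continuous_on_ramp compact_support_ramp) auto
  with tendsto_integral_ramp[OF N] have "(\<lambda>k. integral\<^sup>L M (ramp a b (1 / Suc k))) \<longlonglongrightarrow> measure N {a<..b}"
    by simp
  then have "measure M {a<..b} = measure N {a<..b}"
    by (rule LIMSEQ_unique[OF tendsto_integral_ramp[OF M]])
  then show "emeasure M X = emeasure N X"
    using radon_measure_emeasure_Ioc_finite[OF M] radon_measure_emeasure_Ioc_finite[OF N]
    by (simp add: X emeasure_eq_ennreal_measure)
qed simp

lemma vague_limit_unique: "vague_limit \<mu>s \<mu> \<Longrightarrow> vague_limit \<mu>s \<nu> \<Longrightarrow> \<mu> = \<nu>"
  unfolding vague_limit_def by (blast intro: radon_measure_eqI LIMSEQ_unique)

(* The Borel measure \<Sum> t \<in> D. h t \<delta>_t; negative weights are truncated to 0 by ennreal. *)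
definition weighted_dirac_comb :: "real set \<Rightarrow> (real \<Rightarrow> real) \<Rightarrow> real measure" where
  "weighted_dirac_comb D h = distr (point_measure D (\<lambda>t. ennreal (h t))) borel (\<lambda>t. t)"

lemma sets_weighted_dirac_comb [simp]: "sets (weighted_dirac_comb D h) = sets borel"
  by (simp add: weighted_dirac_comb_def)

lemma emeasure_weighted_dirac_comb:
  assumes "A \<in> sets borel"
  shows "emeasure (weighted_dirac_comb D h) A = (\<integral>\<^sup>+ t. ennreal (h t) \<partial>count_space (D \<inter> A))"
proof -
  have "emeasure (weighted_dirac_comb D h) A = emeasure (point_measure D (\<lambda>t. ennreal (h t))) (A \<inter> D)"
    using assms by (simp add: weighted_dirac_comb_def emeasure_distr space_point_measure)
  also have "\<dots> = (\<integral>\<^sup>+ t. ennreal (h t) * indicator (A \<inter> D) t \<partial>count_space D)"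
    by (simp add: point_measure_def emeasure_density)
  also have "\<dots> = (\<integral>\<^sup>+ t. ennreal (h t) \<partial>count_space (D \<inter> A))"
    by (simp add: nn_integral_count_space_indicator) (auto intro!: nn_integral_cong split: split_indicator)
  finally show ?thesis .
qed

lemma integral_weighted_dirac_comb:
  fixes f :: "real \<Rightarrow> real"
  assumes f: "f \<in> borel_measurable borel" and h: "\<And>t. t \<in> D \<Longrightarrow> 0 \<le> h t"
    and S: "finite S" "S \<subseteq> D" and vanish: "\<And>t. t \<in> D \<Longrightarrow> t \<notin> S \<Longrightarrow> f t = 0"
  shows "integral\<^sup>L (weighted_dirac_comb D h) f = (\<Sum>t\<in>S. f t * h t)"
proof -
  have "integral\<^sup>L (weighted_dirac_comb D h) f = integral\<^sup>L (count_space D) (\<lambda>t. h t * f t)"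
    using f h by (simp add: weighted_dirac_comb_def integral_distr point_measure_def integral_density
        AE_count_space)
  also have "\<dots> = (\<Sum>t\<in>S. h t * f t)"
    using S vanish by (subst lebesgue_integral_count_space_finite_support)
      (auto intro: finite_subset intro!: sum.mono_neutral_left)
  finally show ?thesis
    by (simp add: mult.commute)
qed

lemma radon_measure_weighted_dirac_comb:
  assumes "\<And>K. compact K \<Longrightarrow> finite (K \<inter> D)"
  shows "radon_measure (weighted_dirac_comb D h)"
  unfolding radon_measure_def
proof (intro conjI allI impI)
  fix K :: "real set" assume "compact K"
  moreover have fin: "finite (D \<inter> K)"
    using assms[OF \<open>compact K\<close>] by (simp add: Int_commute)
  ultimately have "emeasure (weighted_dirac_comb D h) K = (\<Sum>t\<in>D \<inter> K. ennreal (h t))"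
    by (simp add: emeasure_weighted_dirac_comb borel_compact nn_integral_count_space_finite)
  with fin show "emeasure (weighted_dirac_comb D h) K < \<infinity>"
    by simp
qed simp

lemma isolating_distance:
  fixes D :: "real set"
  assumes "finite (cball t 1 \<inter> D)"
  obtains \<delta> where "\<delta> > 0" "\<And>s. s \<in> D \<Longrightarrow> s \<noteq> t \<Longrightarrow> \<delta> \<le> \<bar>s - t\<bar>"
proof -
  obtain d where "d > 0" and d: "\<And>s. s \<in> cball t 1 \<inter> D \<Longrightarrow> s \<noteq> t \<Longrightarrow> d \<le> dist t s"
    using finite_set_avoid[OF assms, of t] by blast
  have "min d 1 \<le> \<bar>s - t\<bar>" if "s \<in> D" "s \<noteq> t" for s
    using d[of s] that by (cases "s \<in> cball t 1") (auto simp: dist_real_def)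
  with \<open>d > 0\<close> show ?thesis
    by (intro that[of "min d 1"]) auto
qed

lemma autocorr_coeff_nonneg: "0 \<le> autocorr_coeff F t"
  by (simp add: autocorr_coeff_def)

lemma autocorr_coeff_eq_0:
  assumes "F \<subseteq> \<Lambda>" "t \<notin> diffset \<Lambda>"
  shows "autocorr_coeff F t = 0"
proof -
  have "F \<inter> (\<lambda>y. - t + y) ` F = {}"
    using assms(1) Int_translation_eq_empty[OF assms] by blast
  then show ?thesis
    by (simp add: autocorr_coeff_def)
qed

lemma convergent_autocorr_coeff_of_vague_limit:
  assumes flc: "finite_local_complexity \<Lambda>" and F: "\<And>n. F n \<subseteq> \<Lambda>" "\<And>n. finite (F n)"
    and V: "vague_limit (\<lambda>n. autocorr_measure (F n)) \<gamma>"
  shows "convergent (\<lambda>n. autocorr_coeff (F n) t)"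
proof (cases "t \<in> diffset \<Lambda>")
  case False
  then have "autocorr_coeff (F n) t = 0" for n
    using F(1) by (intro autocorr_coeff_eq_0)
  then show ?thesis
    by (simp add: convergent_const)
next
  case True
  have "finite (cball t 1 \<inter> diffset \<Lambda>)"
    using flc by (simp add: finite_local_complexity_def)
  then obtain \<delta> where "\<delta> > 0" and \<delta>: "\<And>s. s \<in> diffset \<Lambda> \<Longrightarrow> s \<noteq> t \<Longrightarrow> \<delta> \<le> \<bar>s - t\<bar>"
    using isolating_distance by blast
  define f where "f = ramp (t - \<delta>) t \<delta>"
  have f_cont: "continuous_on UNIV f"
    using \<open>\<delta> > 0\<close> unfolding f_def by (intro continuous_on_ramp) simp
  have f_supp: "compact (closure {x. f x \<noteq> 0})"
    using \<open>\<delta> > 0\<close> unfolding f_def by (rule compact_support_ramp)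
  have "f t = 1"
    using \<open>\<delta> > 0\<close> by (simp add: f_def ramp_eq_1)
  have "f s = 0" if "s \<in> diffset \<Lambda>" "s \<noteq> t" for s
    using \<delta>[OF that] \<open>\<delta> > 0\<close> unfolding f_def by (intro ramp_eq_0) auto
  then have "f (x - y) = 0" if "x \<in> F n" "y \<in> F n" "x - y \<notin> {t}" for x y n
    using that F(1) by (blast intro: diff_mem_diffset)
  then have "integral\<^sup>L (autocorr_measure (F n)) f = (\<Sum>s\<in>{t}. f s * autocorr_coeff (F n) s)" for n
    by (intro integral_autocorr_measure_eq_sum F(2) borel_measurable_continuous_onI[OF f_cont]) auto
  with \<open>f t = 1\<close> have "integral\<^sup>L (autocorr_measure (F n)) f = autocorr_coeff (F n) t" for n
    by simp
  moreover have "(\<lambda>n. integral\<^sup>L (autocorr_measure (F n)) f) \<longlonglongrightarrow> integral\<^sup>L \<gamma> f"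
    using V f_cont f_supp by (simp add: vague_limit_def)
  ultimately show ?thesis
    by (auto simp: convergent_def)
qed

lemma vague_limit_autocorr_measure:
  assumes flc: "finite_local_complexity \<Lambda>" and F: "\<And>n. F n \<subseteq> \<Lambda>" "\<And>n. finite (F n)"
    and lim: "\<And>t. (\<lambda>n. autocorr_coeff (F n) t) \<longlonglongrightarrow> h t"
  shows "vague_limit (\<lambda>n. autocorr_measure (F n)) (weighted_dirac_comb (diffset \<Lambda>) h)"
  unfolding vague_limit_def
proof (intro conjI allI impI)
  show "radon_measure (weighted_dirac_comb (diffset \<Lambda>) h)"
    using flc by (intro radon_measure_weighted_dirac_comb) (simp add: finite_local_complexity_def)
  fix f :: "real \<Rightarrow> real"
  assume "continuous_on UNIV f \<and> compact (closure {x. f x \<noteq> 0})"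
  then have f_meas: "f \<in> borel_measurable borel" and f_supp: "compact (closure {x. f x \<noteq> 0})"
    by (auto intro: borel_measurable_continuous_onI)
  define S where "S = closure {x. f x \<noteq> 0} \<inter> diffset \<Lambda>"
  have "finite S"
    using flc f_supp by (simp add: S_def finite_local_complexity_def)
  have vanish: "f s = 0" if "s \<in> diffset \<Lambda>" "s \<notin> S" for s
    using that closure_subset[of "{x. f x \<noteq> 0}"] by (auto simp: S_def)
  have "f (x - y) = 0" if "x \<in> F n" "y \<in> F n" "x - y \<notin> S" for x y n
    using that F(1) by (blast intro: vanish diff_mem_diffset)
  then have "integral\<^sup>L (autocorr_measure (F n)) f = (\<Sum>t\<in>S. f t * autocorr_coeff (F n) t)" for n
    by (intro integral_autocorr_measure_eq_sum F(2) \<open>finite S\<close> f_meas) auto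
  moreover have "(\<lambda>n. \<Sum>t\<in>S. f t * autocorr_coeff (F n) t) \<longlonglongrightarrow> (\<Sum>t\<in>S. f t * h t)"
    by (intro tendsto_sum tendsto_mult tendsto_const lim)
  moreover have h_nonneg: "0 \<le> h t" for t
    by (rule LIMSEQ_le_const[OF lim]) (simp add: autocorr_coeff_nonneg)
  have "integral\<^sup>L (weighted_dirac_comb (diffset \<Lambda>) h) f = (\<Sum>t\<in>S. f t * h t)"
    by (rule integral_weighted_dirac_comb[OF f_meas h_nonneg \<open>finite S\<close> _ vanish]) (simp add: S_def)
  ultimately show "(\<lambda>n. integral\<^sup>L (autocorr_measure (F n)) f) \<longlonglongrightarrow> integral\<^sup>L (weighted_dirac_comb (diffset \<Lambda>) h) f"
    by simp
qed

lemma vague_limit_autocorr_measure_iff: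
  assumes flc: "finite_local_complexity \<Lambda>" and F: "\<And>n. F n \<subseteq> \<Lambda>" "\<And>n. finite (F n)"
    and approx: "\<And>t. (\<lambda>n. \<eta> t n - autocorr_coeff (F n) t) \<longlonglongrightarrow> 0"
  shows "(\<exists>\<gamma>. vague_limit (\<lambda>n. autocorr_measure (F n)) \<gamma>) \<longleftrightarrow> (\<forall>t. convergent (\<eta> t))"
    and "vague_limit (\<lambda>n. autocorr_measure (F n)) \<gamma> \<Longrightarrow>
           \<gamma> = weighted_dirac_comb (diffset \<Lambda>) (\<lambda>t. lim (\<eta> t))"
proof -
  have convergent: "convergent (\<eta> t)" if V: "vague_limit (\<lambda>n. autocorr_measure (F n)) \<gamma>'" for \<gamma>' t
  proof -
    obtain l where "(\<lambda>n. autocorr_coeff (F n) t) \<longlonglongrightarrow> l"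
      using convergent_autocorr_coeff_of_vague_limit[OF flc F V] by (auto simp: convergent_def)
    then have "\<eta> t \<longlonglongrightarrow> l"
      by (rule Lim_transform[OF _ approx])
    then show ?thesis
      by (auto simp: convergent_def)
  qed
  have vague: "vague_limit (\<lambda>n. autocorr_measure (F n)) (weighted_dirac_comb (diffset \<Lambda>) (\<lambda>t. lim (\<eta> t)))"
    if "\<forall>t. convergent (\<eta> t)"
    using that approx
    by (intro vague_limit_autocorr_measure[OF flc F]) (auto simp: convergent_LIMSEQ_iff intro: Lim_transform2)
  show "(\<exists>\<gamma>. vague_limit (\<lambda>n. autocorr_measure (F n)) \<gamma>) \<longleftrightarrow> (\<forall>t. convergent (\<eta> t))"
  proof
    assume "\<exists>\<gamma>. vague_limit (\<lambda>n. autocorr_measure (F n)) \<gamma>"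
    then show "\<forall>t. convergent (\<eta> t)"
      using convergent by blast
  next
    assume "\<forall>t. convergent (\<eta> t)"
    then show "\<exists>\<gamma>. vague_limit (\<lambda>n. autocorr_measure (F n)) \<gamma>"
      using vague by blast
  qed
  show "\<gamma> = weighted_dirac_comb (diffset \<Lambda>) (\<lambda>t. lim (\<eta> t))"
    if V: "vague_limit (\<lambda>n. autocorr_measure (F n)) \<gamma>"
    using V vague[OF allI[OF convergent[OF V]]] by (rule vague_limit_unique)
qed

theorem lemma3p16:
  fixes \<Lambda> :: "real set" and a b :: "nat \<Rightarrow> real"
  defines "F \<equiv> (\<lambda>n. \<Lambda> \<inter> {a n..b n})"
  assumes ud: "uniformly_discrete \<Lambda>"
    and ab: "\<And>n. a n \<le> b n"
    and vanHove: "filterlim (\<lambda>n. b n - a n) at_top sequentially"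
    and card_inf: "filterlim (\<lambda>n. card (F n)) at_top sequentially"
  shows "(\<forall>t \<in> diffset \<Lambda>.
           (\<lambda>n. (real (card (\<Lambda> \<inter> ((\<lambda>y. - t + y) ` \<Lambda>) \<inter> {a n..b n}))
                  - real (card (F n \<inter> ((\<lambda>y. - t + y) ` F n)))) / real (card (F n)))
           \<longlonglongrightarrow> 0)
    \<and> (finite_local_complexity \<Lambda> \<longrightarrow>
         ((\<exists>\<gamma>. vague_limit (\<lambda>n. autocorr_measure (F n)) \<gamma>) \<longleftrightarrow>
            (\<forall>t. convergent (\<lambda>n. real (card (F n \<inter> ((\<lambda>y. - t + y) ` \<Lambda>))) / real (card (F n)))))
       \<and> (\<forall>\<gamma>. vague_limit (\<lambda>n. autocorr_measure (F n)) \<gamma> \<longrightarrow>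
            (\<forall>A \<in> sets borel. emeasure \<gamma> A =
               (\<integral>\<^sup>+ t. ennreal (lim (\<lambda>n. real (card (F n \<inter> ((\<lambda>y. - t + y) ` \<Lambda>))) / real (card (F n))))
                 \<partial>count_space (diffset \<Lambda> \<inter> A)))))"
proof -
  define \<eta> where "\<eta> t n = real (card (F n \<inter> (\<lambda>y. - t + y) ` \<Lambda>)) / real (card (F n))" for t n
  have F: "F n \<subseteq> \<Lambda>" "finite (F n)" for n
    using uniformly_discrete_finite_Int_interval[OF ud] by (auto simp: F_def)
  have boundary: "(\<lambda>n. (real (card (\<Lambda> \<inter> (\<lambda>y. - t + y) ` \<Lambda> \<inter> {a n..b n}))
                    - real (card (F n \<inter> (\<lambda>y. - t + y) ` F n))) / real (card (F n))) \<longlonglongrightarrow> 0" for t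
    using tendsto_card_translation_boundary[OF ud card_inf[unfolded F_def]] by (simp add: F_def)
  moreover have "\<Lambda> \<inter> (\<lambda>y. - t + y) ` \<Lambda> \<inter> {a n..b n} = F n \<inter> (\<lambda>y. - t + y) ` \<Lambda>" for t n
    by (auto simp: F_def)
  ultimately have approx: "(\<lambda>n. \<eta> t n - autocorr_coeff (F n) t) \<longlonglongrightarrow> 0" for t
    by (simp add: \<eta>_def autocorr_coeff_def diff_divide_distrib)
  show ?thesis
    unfolding \<eta>_def[symmetric]
  proof (intro conjI impI allI ballI)
    fix t show "(\<lambda>n. (real (card (\<Lambda> \<inter> (\<lambda>y. - t + y) ` \<Lambda> \<inter> {a n..b n}))
                    - real (card (F n \<inter> (\<lambda>y. - t + y) ` F n))) / real (card (F n))) \<longlonglongrightarrow> 0"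
      by (rule boundary)
  next
    fix \<gamma> and A :: "real set"
    assume flc: "finite_local_complexity \<Lambda>"
    then show "(\<exists>\<gamma>. vague_limit (\<lambda>n. autocorr_measure (F n)) \<gamma>) \<longleftrightarrow> (\<forall>t. convergent (\<eta> t))"
      by (rule vague_limit_autocorr_measure_iff(1)[OF _ F approx])
    assume V: "vague_limit (\<lambda>n. autocorr_measure (F n)) \<gamma>" and "A \<in> sets borel"
    then show "emeasure \<gamma> A = (\<integral>\<^sup>+ t. ennreal (lim (\<eta> t)) \<partial>count_space (diffset \<Lambda> \<inter> A))"
      using vague_limit_autocorr_measure_iff(2)[OF flc F approx V] by (simp add: emeasure_weighted_dirac_comb)
  qed
qed

end
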